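(* Let $\mathcal{X}$ be a feature space, $D$ a joint distribution over pairs $(y,x)$ with $y\in\{0,1\}$ and $x\in\mathcal{X}$, $R:\mathcal{X}\to[0,1]$ a risk prediction model, $\mathcal{C}\subseteq 2^{\mathcal{X}}$ a collection of subsets, and $\alpha>0$. If $R$ satisfies $\alpha$-proportional multicalibration on $\mathcal{C}$, then $R$ is $\frac{\alpha}{1-\alpha}$-multicalibrated on $\mathcal{C}$.
   Context: For $S\subseteq\mathcal{X}$ and $\alpha>0$, $R$ is $\alpha$-proportionally calibrated with respect to $S$ if there exists $S'\subseteq S$ with $|S'|\ge(1-\alpha)|S|$ such that for all $r\in[0,1]$, $|\mathbb{E}_D[y\mid R=r, x\in S']-r|\le\alpha\,\mathbb{E}_D[y\mid R=r, x\in S']$; $R$ is $\alpha$-proportionally multicalibrated on $\mathcal{C}$ if it is $\alpha$-proportionally calibrated with respect to every $S\in\mathcal{C}$. For $\beta\ge0$, $R$ is $\beta$-calibrated with respect to $S$ if there exists $S'\subseteq S$ with $|S'|\ge(1-\beta)|S|$ such that for all $r\in[0,1]$, $|\mathbb{E}_D[y\mid R=r, x\in S']-r|\le\beta$; $R$ is $\beta$-multicalibrated on $\mathcal{C}$ if it is $\beta$-calibrated with respect to every $S\in\mathcal{C}$. *)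

theory Defs
  imports "HOL-Probability.Probability"
begin

text \<open>D is a distribution (pmf) over pairs (y, x), with y in {0,1} (as a real number).
  The event "R = r and x in S'" .\<close>

definition event_RS :: "('x \<Rightarrow> real) \<Rightarrow> 'x set \<Rightarrow> real \<Rightarrow> (real \<times> 'x) set" where
  "event_RS R S' r = {(y, x). R x = r \<and> x \<in> S'}"

text \<open>Conditional expectation E_D[y | R = r, x in S'] (only used when the event has positive probability).\<close>
definition cond_exp_y :: "(real \<times> 'x) pmf \<Rightarrow> ('x \<Rightarrow> real) \<Rightarrow> 'x set \<Rightarrow> real \<Rightarrow> real" where
  "cond_exp_y D R S' r =
     measure_pmf.expectation D (\<lambda>p. fst p * indicator (event_RS R S' r) p)
     / measure_pmf.prob D (event_RS R S' r)"

definition prop_calibrated ::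
  "real \<Rightarrow> (real \<times> 'x::finite) pmf \<Rightarrow> ('x \<Rightarrow> real) \<Rightarrow> 'x set \<Rightarrow> bool" where
  "prop_calibrated \<alpha> D R S \<longleftrightarrow>
     (\<exists>S'. S' \<subseteq> S \<and> real (card S') \<ge> (1 - \<alpha>) * real (card S) \<and>
        (\<forall>r\<in>{0..1}. measure_pmf.prob D (event_RS R S' r) > 0 \<longrightarrow>
            \<bar>cond_exp_y D R S' r - r\<bar> \<le> \<alpha> * cond_exp_y D R S' r))"

definition prop_multicalibrated ::
  "real \<Rightarrow> (real \<times> 'x::finite) pmf \<Rightarrow> ('x \<Rightarrow> real) \<Rightarrow> 'x set set \<Rightarrow> bool" where
  "prop_multicalibrated \<alpha> D R \<C> \<longleftrightarrow> (\<forall>S\<in>\<C>. prop_calibrated \<alpha> D R S)"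

definition calibrated ::
  "real \<Rightarrow> (real \<times> 'x::finite) pmf \<Rightarrow> ('x \<Rightarrow> real) \<Rightarrow> 'x set \<Rightarrow> bool" where
  "calibrated \<beta> D R S \<longleftrightarrow>
     (\<exists>S'. S' \<subseteq> S \<and> real (card S') \<ge> (1 - \<beta>) * real (card S) \<and>
        (\<forall>r\<in>{0..1}. measure_pmf.prob D (event_RS R S' r) > 0 \<longrightarrow>
            \<bar>cond_exp_y D R S' r - r\<bar> \<le> \<beta>))"

definition multicalibrated ::
  "real \<Rightarrow> (real \<times> 'x::finite) pmf \<Rightarrow> ('x \<Rightarrow> real) \<Rightarrow> 'x set set \<Rightarrow> bool" where
  "multicalibrated \<beta> D R \<C> \<longleftrightarrow> \<beta> \<ge> 0 \<and> (\<forall>S\<in>\<C>. calibrated \<beta> D R S)"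

end

theory Submission
  imports Defs
begin

text \<open>Since labels lie in [0,1], every conditional mean E[y | R = r, x \<in> S'] is at most 1.
  Hence the proportional bound \<alpha> E[y | \<dots>] on the calibration error is at most \<alpha>, which
  in turn is at most \<alpha> / (1 - \<alpha>); the size condition on S' only gets weaker as the
  tolerance grows.\<close>

lemma cond_exp_y_le_one:
  assumes labels: "\<forall>p\<in>set_pmf D. fst p \<in> {0..1}"
    and pos: "measure_pmf.prob D (event_RS R S' r) > 0"
  shows "cond_exp_y D R S' r \<le> 1"
proof -
  let ?A = "event_RS R S' r"
  have "measure_pmf.expectation D (\<lambda>p. fst p * indicator ?A p)
        \<le> measure_pmf.expectation D (indicator ?A)"
  proof (rule integral_mono_AE)
    show "integrable (measure_pmf D) (\<lambda>p. fst p * indicator ?A p)"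
      by (rule measure_pmf.integrable_const_bound[where B = 1])
        (use labels in \<open>auto simp: AE_measure_pmf_iff indicator_def\<close>)
    show "AE p in measure_pmf D. fst p * indicator ?A p \<le> (indicator ?A p :: real)"
      using labels by (auto simp: AE_measure_pmf_iff indicator_def)
    show "integrable (measure_pmf D) (indicator ?A :: _ \<Rightarrow> real)"
      by (rule measure_pmf.integrable_const_bound[where B = 1]) auto
  qed
  also have "\<dots> = measure_pmf.prob D ?A" by simp
  finally show ?thesis using pos unfolding cond_exp_y_def by simp
qed

lemma calibrated_if_prop_calibrated:
  assumes labels: "\<forall>p\<in>set_pmf D. fst p \<in> {0..1}"
    and "0 \<le> \<alpha>" "\<alpha> \<le> \<beta>"
    and "prop_calibrated \<alpha> D R S"
  shows "calibrated \<beta> D R S"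
proof -
  obtain S' where "S' \<subseteq> S" and card_S': "(1 - \<alpha>) * real (card S) \<le> real (card S')"
    and prop_cal: "\<And>r. r \<in> {0..1} \<Longrightarrow> measure_pmf.prob D (event_RS R S' r) > 0 \<Longrightarrow>
            \<bar>cond_exp_y D R S' r - r\<bar> \<le> \<alpha> * cond_exp_y D R S' r"
    using assms(4) unfolding prop_calibrated_def by blast
  have "(1 - \<beta>) * real (card S) \<le> real (card S')"
    using card_S' \<open>\<alpha> \<le> \<beta>\<close> mult_right_mono[of "1 - \<beta>" "1 - \<alpha>" "real (card S)"] by linarith
  moreover have "\<bar>cond_exp_y D R S' r - r\<bar> \<le> \<beta>"
    if "r \<in> {0..1}" "measure_pmf.prob D (event_RS R S' r) > 0" for r
  proof -
    have "\<alpha> * cond_exp_y D R S' r \<le> \<alpha>"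
      using cond_exp_y_le_one[OF labels that(2)] \<open>0 \<le> \<alpha>\<close> by (rule mult_left_le)
    then show ?thesis using prop_cal[OF that] \<open>\<alpha> \<le> \<beta>\<close> by linarith
  qed
  ultimately show ?thesis unfolding calibrated_def using \<open>S' \<subseteq> S\<close> by blast
qed

theorem theorem9:
  fixes D :: "(real \<times> 'x::finite) pmf"
    and R :: "'x \<Rightarrow> real"
    and \<C> :: "'x set set"
    and \<alpha> :: real
  assumes "set_pmf D \<subseteq> {0, 1} \<times> UNIV"
    and "\<And>x. R x \<in> {0..1}"
    and "\<alpha> > 0" and "\<alpha> < 1"
    and "prop_multicalibrated \<alpha> D R \<C>"
  shows "multicalibrated (\<alpha> / (1 - \<alpha>)) D R \<C>"
proof -
  have labels: "\<forall>p\<in>set_pmf D. fst p \<in> {0..1}"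
    using assms(1) by auto
  have "\<alpha> * (1 - \<alpha>) \<le> \<alpha>"
    using assms(3,4) by (intro mult_left_le) auto
  then have "\<alpha> \<le> \<alpha> / (1 - \<alpha>)"
    using assms(4) by (simp add: pos_le_divide_eq)
  then have "calibrated (\<alpha> / (1 - \<alpha>)) D R S" if "S \<in> \<C>" for S
    using assms(3,5) that calibrated_if_prop_calibrated[OF labels, of \<alpha>]
    unfolding prop_multicalibrated_def by auto
  then show ?thesis
    using assms(3,4) unfolding multicalibrated_def by auto
qed

end
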